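(* Let $a$ be a non-degenerate arrow environment and let $(X_t)$ be the walk on $a$ started at $0$. Let $Z^+$ and $Z^-$ be the processes on $a$ with initial values $Z^+_0=Z^-_0=1$. Then $T_{-1}<\infty$ if and only if $Z^+_n=0$ for some $n$, and $T_1<\infty$ if and only if $Z^-_n=0$ for some $n$.
   Context: Notation: $\mathbb N=\{1,2,\dots\}$, $\mathbb Z_+=\{0,1,2,\dots\}$. An arrow environment is $a\in\{0,1\}^{\mathbb Z\times\mathbb N}$. The walk on $a$ started at $x$ is the deterministic sequence with $X_0=x$ and $X_n=X_{n-1}+1$ if $a(X_{n-1},k)=1$, $X_n=X_{n-1}-1$ if $a(X_{n-1},k)=0$, where $k=\#\{j\le n-1:X_j=X_{n-1}\}$. For $m\in\mathbb Z$, $T_m=\inf\{t\ge0:X_t=m\}$. A sequence $b\in\{0,1\}^{\mathbb N}$ is non-degenerate if $b(i)\ne b(i+1)$ for infinitely many $i$; $a$ is non-degenerate if every $a(x,\cdot)$ is. For non-degenerate $b$: $U^+_b(0)=0$ and for $x\ge1$, $U^+_b(x)$ is the number of indices $i$ with $b(i)=1$ that precede the $x$-th index $j$ with $b(j)=0$; $U^-_b(x)$ is defined the same way with the roles of $0$ and $1$ exchanged. For non-degenerate $a$ and $y\in\mathbb Z_+$, the processes with initial value $y$ are $Z^+_0=y$, $Z^+_n=U^+_{a(n-1,\cdot)}(Z^+_{n-1})$ and $Z^-_0=y$, $Z^-_n=U^-_{a(1-n,\cdot)}(Z^-_{n-1})$ for $n\ge1$. *)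

theory Defs
  imports Main "HOL-Library.Infinite_Set"
begin

text \<open>Arrow environments: a :: int => nat => bool, where a x k (k >= 1) is the k-th
arrow at site x; True encodes 1 (step right), False encodes 0 (step left).
The value at k = 0 is irrelevant (indices start at 1).\<close>

type_synonym arrow_env = "int \<Rightarrow> nat \<Rightarrow> bool"

primrec walk_hist :: "arrow_env \<Rightarrow> int \<Rightarrow> nat \<Rightarrow> int list" where
  "walk_hist a x 0 = [x]"
| "walk_hist a x (Suc n) =
     (let h = walk_hist a x n; y = last h; k = count_list h y
      in h @ [if a y k then y + 1 else y - 1])"

definition walk :: "arrow_env \<Rightarrow> int \<Rightarrow> nat \<Rightarrow> int" where
  "walk a x n = last (walk_hist a x n)"

definition nondeg_seq :: "(nat \<Rightarrow> bool) \<Rightarrow> bool" where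
  "nondeg_seq b \<longleftrightarrow> infinite {i. 1 \<le> i \<and> b i \<noteq> b (Suc i)}"

definition nondeg_env :: "arrow_env \<Rightarrow> bool" where
  "nondeg_env a \<longleftrightarrow> (\<forall>x. nondeg_seq (a x))"

definition nth_index :: "(nat \<Rightarrow> bool) \<Rightarrow> bool \<Rightarrow> nat \<Rightarrow> nat" where
  "nth_index b v x = enumerate {j. 1 \<le> j \<and> b j = v} (x - 1)"

definition Uplus :: "(nat \<Rightarrow> bool) \<Rightarrow> nat \<Rightarrow> nat" where
  "Uplus b x = (if x = 0 then 0
                else card {i. 1 \<le> i \<and> i < nth_index b False x \<and> b i})"

definition Uminus :: "(nat \<Rightarrow> bool) \<Rightarrow> nat \<Rightarrow> nat" where
  "Uminus b x = (if x = 0 then 0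
                 else card {i. 1 \<le> i \<and> i < nth_index b True x \<and> \<not> b i})"

primrec Zplus :: "arrow_env \<Rightarrow> nat \<Rightarrow> nat \<Rightarrow> nat" where
  "Zplus a y 0 = y"
| "Zplus a y (Suc n) = Uplus (a (int (Suc n) - 1)) (Zplus a y n)"

primrec Zminus :: "arrow_env \<Rightarrow> nat \<Rightarrow> nat \<Rightarrow> nat" where
  "Zminus a y 0 = y"
| "Zminus a y (Suc n) = Uminus (a (1 - int (Suc n))) (Zminus a y n)"

end

theory Submission
  imports Defs
begin

text \<open>Every crossing of the edge between \<open>y\<close> and \<open>y + 1\<close> consumes a right arrow at \<open>y\<close>
(upwards) or a left arrow at \<open>y + 1\<close> (downwards), so after any time the numbers of used right
arrows at \<open>y\<close> and used left arrows at \<open>y + 1\<close> differ by the net number of crossings.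
At the hitting time of \<open>-1\<close> the net crossings vanish on every edge above \<open>-1\<close> and the last
arrow used at each visited site \<open>y \<ge> 0\<close> points left; hence \<open>Z\<^sup>+\<^sub>y\<close> is exactly the number
of left arrows used at \<open>y\<close>, which is \<open>0\<close> for \<open>y\<close> beyond the range of the walk.
If \<open>-1\<close> is never hit, non-degeneracy forces the walk to be unbounded above (a site visited
infinitely often is left infinitely often to the left); at a time when the walk is above
\<open>n\<close>, induction on \<open>y \<le> n\<close> shows that fewer than \<open>Z\<^sup>+\<^sub>y\<close> left arrows have been used at \<open>y\<close>,
so \<open>Z\<^sup>+\<^sub>n > 0\<close>.
The statement about \<open>T\<^sub>1\<close> and \<open>Z\<^sup>-\<close> follows by reflecting the environment.\<close>

definition visits :: "arrow_env \<Rightarrow> int \<Rightarrow> nat \<Rightarrow> int \<Rightarrow> nat" where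
  "visits a x t y = card {j. j < t \<and> walk a x j = y}"

lemma visits_0 [simp]: "visits a x 0 y = 0"
  by (simp add: visits_def)

lemma visits_Suc:
  "visits a x (Suc t) y = visits a x t y + (if walk a x t = y then 1 else 0)"
proof -
  have "{j. j < Suc t \<and> walk a x j = y}
      = {j. j < t \<and> walk a x j = y} \<union> (if walk a x t = y then {t} else {})"
    by (auto simp: less_Suc_eq)
  then show ?thesis
    by (simp add: visits_def card_insert_if)
qed

lemma count_list_map_upt: "count_list (map f [0..<n]) y = card {j. j < n \<and> f j = y}"
proof (induction n)
  case (Suc n)
  have "{j. j < Suc n \<and> f j = y} = {j. j < n \<and> f j = y} \<union> (if f n = y then {n} else {})"
    by (auto simp: less_Suc_eq)
  then show ?case
    using Suc.IH by (simp add: card_insert_if)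
qed simp

lemma walk_hist_eq_map: "walk_hist a x t = map (walk a x) [0..<Suc t]"
proof (induction t)
  case (Suc t)
  have "walk_hist a x (Suc t) = walk_hist a x t @ [walk a x (Suc t)]"
    unfolding walk_def by (simp add: Let_def)
  then show ?case
    using Suc.IH by simp
qed (simp add: walk_def)

lemma walk_hist_ne_Nil: "walk_hist a x t \<noteq> []"
  by (simp add: walk_hist_eq_map)

lemma walk_0 [simp]: "walk a x 0 = x"
  by (simp add: walk_def)

lemma walk_Suc:
  "walk a x (Suc t) =
     (if a (walk a x t) (Suc (visits a x t (walk a x t))) then walk a x t + 1 else walk a x t - 1)"
proof -
  have "count_list (walk_hist a x t) (walk a x t) = Suc (visits a x t (walk a x t))"
    using visits_Suc[of a x t "walk a x t"]
    by (simp add: walk_hist_eq_map count_list_map_upt visits_def)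
  then show ?thesis
    by (simp add: walk_def Let_def)
qed

lemma walk_Suc_cases: "walk a x (Suc t) = walk a x t + 1 \<or> walk a x (Suc t) = walk a x t - 1"
  by (simp add: walk_Suc)

lemma walk_le: "walk a x t \<le> x + int t"
proof (induction t)
  case (Suc t)
  then show ?case
    using walk_Suc_cases[of a x t] by auto
qed simp

definition count_arrows :: "(nat \<Rightarrow> bool) \<Rightarrow> bool \<Rightarrow> nat \<Rightarrow> nat" where
  "count_arrows b v m = card {k. 1 \<le> k \<and> k \<le> m \<and> b k = v}"

lemma count_arrows_0 [simp]: "count_arrows b v 0 = 0"
  by (simp add: count_arrows_def)

lemma count_arrows_Suc:
  "count_arrows b v (Suc m) = count_arrows b v m + (if b (Suc m) = v then 1 else 0)"
proof -
  have "{k. 1 \<le> k \<and> k \<le> Suc m \<and> b k = v}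
      = {k. 1 \<le> k \<and> k \<le> m \<and> b k = v} \<union> (if b (Suc m) = v then {Suc m} else {})"
    by (auto simp: le_Suc_eq)
  moreover have "finite {k. 1 \<le> k \<and> k \<le> m \<and> b k = v}"
    by (rule finite_subset[of _ "{..m}"]) auto
  ultimately show ?thesis
    by (auto simp: count_arrows_def card_insert_if)
qed

definition used_arrows :: "arrow_env \<Rightarrow> int \<Rightarrow> nat \<Rightarrow> bool \<Rightarrow> int \<Rightarrow> nat" where
  "used_arrows a x t v y = count_arrows (a y) v (visits a x t y)"

lemma used_arrows_Suc:
  "used_arrows a x (Suc t) v y = used_arrows a x t v y
     + (if walk a x t = y \<and> a y (Suc (visits a x t y)) = v then 1 else 0)"
  by (simp add: used_arrows_def visits_Suc count_arrows_Suc)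

lemma used_arrows_balance:
  "int (used_arrows a x t True y) - int (used_arrows a x t False (y + 1)) =
     (if x \<le> y \<and> y < walk a x t then 1 else if walk a x t \<le> y \<and> y < x then -1 else 0)"
proof (induction t)
  case 0
  then show ?case
    by (simp add: used_arrows_def)
next
  case (Suc t)
  then show ?case
    using walk_Suc[of a x t]
    by (cases "walk a x t = y"; cases "walk a x t = y + 1") (auto simp: used_arrows_Suc)
qed

lemma card_less_enumerate:
  assumes "infinite (S :: nat set)"
  shows "card {s \<in> S. s < enumerate S n} = n"
proof -
  have "{s \<in> S. s < enumerate S n} = enumerate S ` {..<n}"
  proof (intro set_eqI iffI)
    fix s assume "s \<in> {s \<in> S. s < enumerate S n}"
    moreover obtain k where "enumerate S k = s"
      using enumerate_Ex[OF assms] calculation by blast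
    ultimately show "s \<in> enumerate S ` {..<n}"
      using assms by auto
  qed (use assms enumerate_in_set in auto)
  moreover have "inj_on (enumerate S) {..<n}"
    using inj_enumerate[OF assms] by (simp add: inj_on_def inj_def)
  ultimately show ?thesis
    by (simp add: card_image)
qed

lemma nondeg_seq_infinite_values:
  assumes "nondeg_seq b"
  shows "infinite {j. 1 \<le> j \<and> b j = v}"
proof
  assume "finite {j. 1 \<le> j \<and> b j = v}"
  then obtain N where "{j. 1 \<le> j \<and> b j = v} \<subseteq> {..<N}"
    using finite_nat_bounded by blast
  then have N: "\<And>j. 1 \<le> j \<Longrightarrow> b j = v \<Longrightarrow> j < N"
    by auto
  have "{i. 1 \<le> i \<and> b i \<noteq> b (Suc i)} \<subseteq> {..<N}"
  proof
    fix i assume "i \<in> {i. 1 \<le> i \<and> b i \<noteq> b (Suc i)}"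
    then show "i \<in> {..<N}"
      using N[of i] N[of "Suc i"] by (cases "b i = v") auto
  qed
  then show False
    using assms finite_subset by (auto simp: nondeg_seq_def)
qed

lemma Uplus_count_arrows_False:
  assumes inf: "infinite {j. 1 \<le> j \<and> \<not> b j}" and m: "1 \<le> m" "\<not> b m"
  shows "Uplus b (count_arrows b False m) = count_arrows b True m"
proof -
  define S where "S = {j. 1 \<le> j \<and> \<not> b j}"
  obtain k where k: "enumerate S k = m"
    using enumerate_Ex inf m by (auto simp: S_def)
  have "{j. 1 \<le> j \<and> j \<le> m \<and> b j = False} = insert m {s \<in> S. s < m}"
    using m by (auto simp: S_def)
  then have "count_arrows b False m = Suc k"
    using card_less_enumerate[of S k] inf k by (simp add: count_arrows_def S_def)
  moreover have "nth_index b False (Suc k) = m"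
    using k by (simp add: nth_index_def S_def)
  moreover have "{i. 1 \<le> i \<and> i < m \<and> b i} = {j. 1 \<le> j \<and> j \<le> m \<and> b j = True}"
    using m by (auto simp: le_less)
  ultimately show ?thesis
    by (simp add: Uplus_def count_arrows_def)
qed

lemma count_arrows_True_le_Uplus:
  assumes inf: "infinite {j. 1 \<le> j \<and> \<not> b j}" and less: "count_arrows b False m < n"
  shows "count_arrows b True m \<le> Uplus b n"
proof -
  define S where "S = {j. 1 \<le> j \<and> \<not> b j}"
  define J where "J = enumerate S (n - 1)"
  have "n \<noteq> 0"
    using less by simp
  have "m < J"
  proof (rule ccontr)
    assume "\<not> m < J"
    then have "insert J {s \<in> S. s < J} \<subseteq> {j. 1 \<le> j \<and> j \<le> m \<and> b j = False}"
      using enumerate_in_set[of S] inf by (auto simp: S_def J_def)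
    then have "card (insert J {s \<in> S. s < J}) \<le> count_arrows b False m"
      unfolding count_arrows_def by (rule card_mono[rotated]) (auto intro: finite_subset[of _ "{..m}"])
    then show False
      using card_less_enumerate[of S "n - 1"] inf less \<open>n \<noteq> 0\<close> by (simp add: S_def J_def)
  qed
  then have "{j. 1 \<le> j \<and> j \<le> m \<and> b j = True} \<subseteq> {i. 1 \<le> i \<and> i < nth_index b False n \<and> b i}"
    by (auto simp: nth_index_def J_def S_def)
  then show ?thesis
    unfolding count_arrows_def Uplus_def using \<open>n \<noteq> 0\<close>
    by (auto intro: card_mono finite_subset[of _ "{..<nth_index b False n}"])
qed

lemma walk_ge_start:
  assumes "\<And>t. walk a x t \<noteq> x - 1"
  shows "x \<le> walk a x t"
proof (induction t)
  case (Suc t)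
  then show ?case
    using walk_Suc_cases[of a x t] assms[of "Suc t"] by auto
qed simp

lemma walk_intermediate_value:
  assumes "walk a x (s + d) \<le> y" "y \<le> walk a x s"
  shows "\<exists>k. s \<le> k \<and> k \<le> s + d \<and> walk a x k = y"
  using assms(1)
proof (induction d)
  case 0
  then show ?case
    using assms(2) by auto
next
  case (Suc d)
  show ?case
  proof (cases "walk a x (s + d) \<le> y")
    case True
    then show ?thesis
      using Suc.IH le_SucI by fastforce
  next
    case False
    then have "walk a x (s + Suc d) = y"
      using Suc.prems walk_Suc_cases[of a x "s + d"] by auto
    then show ?thesis
      by (intro exI[of _ "s + Suc d"]) auto
  qed
qed

lemma last_used_arrow_points_left:
  assumes below: "walk a x t < y" and visited: "0 < visits a x t y"
  shows "\<not> a y (visits a x t y)"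
proof
  assume right: "a y (visits a x t y)"
  define W where "W = {j. j < t \<and> walk a x j = y}"
  define s where "s = Max W"
  have "W \<noteq> {}"
    using visited unfolding visits_def W_def[symmetric] by auto
  moreover have "finite W"
    by (simp add: W_def)
  ultimately have "s \<in> W" and s_max: "\<And>j. j \<in> W \<Longrightarrow> j \<le> s"
    by (simp_all add: s_def)
  then have "s < t" and "walk a x s = y"
    by (auto simp: W_def)
  have "W = insert s {j. j < s \<and> walk a x j = y}"
    using \<open>s \<in> W\<close> s_max \<open>s < t\<close> by (auto simp: W_def le_less)
  then have "visits a x t y = Suc (visits a x s y)"
    by (simp add: visits_def W_def[symmetric])
  then have "walk a x (Suc s) = y + 1"
    using walk_Suc[of a x s] \<open>walk a x s = y\<close> right by simp
  then obtain k where "Suc s \<le> k" "k \<le> t" "walk a x k = y"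
    using walk_intermediate_value[of a x "Suc s" "t - Suc s" y] below \<open>s < t\<close> by auto
  then have "k \<in> W"
    using below by (auto simp: W_def le_less)
  then show False
    using s_max \<open>Suc s \<le> k\<close> by fastforce
qed

lemma infinite_visits_left_neighbour:
  assumes nondeg: "nondeg_seq (a y)" and inf: "infinite {t. walk a x t = y}"
  shows "infinite {t. walk a x t = y - 1}"
proof
  assume fin: "finite {t. walk a x t = y - 1}"
  define V where "V = {t. walk a x t = y}"
  define L where "L = {k. 1 \<le> k \<and> \<not> a y k}"
  define g where "g k = Suc (enumerate V (k - 1))" for k
  have "g ` L \<subseteq> {t. walk a x t = y - 1}"
  proof
    fix u assume "u \<in> g ` L"
    then obtain k where k: "k \<in> L" "u = g k"
      by blast
    define s where "s = enumerate V (k - 1)"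
    have "walk a x s = y"
      using enumerate_in_set[of V] inf by (simp add: s_def V_def)
    moreover have "{j. j < s \<and> walk a x j = y} = {t \<in> V. t < s}"
      by (auto simp: V_def)
    then have "visits a x s y = k - 1"
      using card_less_enumerate[of V "k - 1"] inf by (simp add: visits_def V_def s_def)
    ultimately show "u \<in> {t. walk a x t = y - 1}"
      using walk_Suc[of a x s] k by (simp add: L_def g_def s_def)
  qed
  moreover have "inj_on g L"
  proof
    fix k l assume "k \<in> L" "l \<in> L" "g k = g l"
    then have "k - 1 = l - 1"
      using inj_enumerate[of V] inf by (simp add: g_def inj_def V_def)
    then show "k = l"
      using \<open>k \<in> L\<close> \<open>l \<in> L\<close> unfolding L_def by simp arith
  qed
  moreover have "infinite L"
    using nondeg_seq_infinite_values[OF nondeg, of False] by (simp add: L_def)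
  ultimately show False
    using fin finite_imageD finite_subset by blast
qed

lemma walk_unbounded_above:
  assumes nondeg: "nondeg_env a" and avoids: "\<And>t. walk a x t \<noteq> x - 1"
  shows "\<exists>t. M < walk a x t"
proof (rule ccontr)
  assume "\<not> ?thesis"
  then have "UNIV = (\<Union>z\<in>{x..M}. {t. walk a x t = z})"
    using walk_ge_start[OF avoids] by (auto simp: not_less)
  then have "\<not> (\<forall>z\<in>{x..M}. finite {t. walk a x t = z})"
    using infinite_UNIV_nat by (metis finite_UN_I finite_atLeastAtMost_int)
  then obtain z where "z \<in> {x..M}" and inf: "infinite {t. walk a x t = z}"
    by blast
  have "infinite {t. walk a x t = z - int d}" for d
  proof (induction d)
    case (Suc d)
    then show ?case
      using infinite_visits_left_neighbour[of a "z - int d" x] nondeg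
      by (simp add: nondeg_env_def algebra_simps)
  qed (simp add: inf)
  from this[of "nat (z - x + 1)"] have "infinite {t. walk a x t = x - 1}"
    using \<open>z \<in> {x..M}\<close> by simp
  then show False
    using avoids not_finite_existsD by blast
qed

lemma Zplus_gt_used_left_arrows:
  assumes nondeg: "nondeg_env a" and avoids: "\<And>t. walk a 0 t \<noteq> -1"
    and "int m \<le> walk a 0 t"
  shows "used_arrows a 0 t False (int m) < Zplus a 1 m"
  using assms(3)
proof (induction m)
  case 0
  have "visits a 0 t (-1) = 0"
    using avoids by (simp add: visits_def)
  then have "used_arrows a 0 t False 0 = 0"
    using used_arrows_balance[of a 0 t "-1"] walk_ge_start[of a 0 t] avoids
    by (simp add: used_arrows_def)
  then show ?case
    by simp
next
  case (Suc m)
  have "infinite {j. 1 \<le> j \<and> \<not> a (int m) j}"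
    using nondeg_seq_infinite_values[of "a (int m)" False] nondeg by (simp add: nondeg_env_def)
  then have "used_arrows a 0 t True (int m) \<le> Zplus a 1 (Suc m)"
    using count_arrows_True_le_Uplus Suc by (simp add: used_arrows_def)
  moreover have "used_arrows a 0 t True (int m) = Suc (used_arrows a 0 t False (int m + 1))"
    using used_arrows_balance[of a 0 t "int m"] Suc.prems by simp
  ultimately show ?case
    by (simp add: add.commute)
qed

lemma Zplus_never_zero_if_avoids:
  assumes "nondeg_env a" and "\<And>t. walk a 0 t \<noteq> -1"
  shows "Zplus a 1 n \<noteq> 0"
proof -
  obtain t where "int n < walk a 0 t"
    using walk_unbounded_above[of a 0 "int n"] assms by auto
  then show ?thesis
    using Zplus_gt_used_left_arrows[of a n t] assms by simp
qed

lemma Zplus_eq_used_left_arrows: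
  assumes nondeg: "nondeg_env a" and hit: "walk a 0 t = -1" and first: "\<And>s. s < t \<Longrightarrow> walk a 0 s \<noteq> -1"
  shows "Zplus a 1 m = used_arrows a 0 t False (int m)"
proof (induction m)
  case 0
  have "visits a 0 t (-1) = 0"
    using first by (simp add: visits_def)
  then show ?case
    using used_arrows_balance[of a 0 t "-1"] hit by (simp add: used_arrows_def)
next
  case (Suc m)
  define b where "b = a (int m)"
  define v where "v = visits a 0 t (int m)"
  have "infinite {j. 1 \<le> j \<and> \<not> b j}"
    using nondeg_seq_infinite_values[of b False] nondeg by (simp add: nondeg_env_def b_def)
  then have "Uplus b (count_arrows b False v) = count_arrows b True v"
    using Uplus_count_arrows_False[of b v] last_used_arrow_points_left[of a 0 t "int m"] hit
    by (cases "v = 0") (simp_all add: Uplus_def b_def v_def)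
  moreover have "used_arrows a 0 t True (int m) = used_arrows a 0 t False (int m + 1)"
    using used_arrows_balance[of a 0 t "int m"] hit by simp
  ultimately show ?case
    using Suc.IH by (simp add: used_arrows_def b_def v_def add.commute)
qed

lemma Zplus_zero_if_hits:
  assumes "nondeg_env a" and "walk a 0 t = -1"
  shows "\<exists>n. Zplus a 1 n = 0"
proof -
  define T where "T = (LEAST t. walk a 0 t = -1)"
  have "walk a 0 T = -1" and "\<And>s. s < T \<Longrightarrow> walk a 0 s \<noteq> -1"
    using LeastI[of _ t] not_less_Least assms(2) by (auto simp: T_def)
  moreover have "walk a 0 s \<noteq> int T" if "s < T" for s
    using walk_le[of a 0 s] that by simp
  then have "visits a 0 T (int T) = 0"
    by (simp add: visits_def)
  ultimately have "Zplus a 1 T = 0"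
    using Zplus_eq_used_left_arrows[of a T T] assms(1) by (simp add: used_arrows_def)
  then show ?thesis ..
qed

lemma walk_hits_left_iff_Zplus_zero:
  assumes "nondeg_env a"
  shows "(\<exists>t. walk a 0 t = -1) \<longleftrightarrow> (\<exists>n. Zplus a 1 n = 0)"
  using Zplus_never_zero_if_avoids Zplus_zero_if_hits assms by blast

definition mirror_env :: "arrow_env \<Rightarrow> arrow_env" where
  "mirror_env a x k = (\<not> a (- x) k)"

lemma walk_hist_mirror_env: "walk_hist (mirror_env a) (- x) t = map uminus (walk_hist a x t)"
proof (induction t)
  case (Suc t)
  have "count_list (map uminus h) (- y) = count_list h y" for h and y :: int
    by (simp add: count_list_map_conv inj_def)
  then show ?case
    using Suc.IH walk_hist_ne_Nil[of a x t] by (simp add: Let_def last_map mirror_env_def)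
qed simp

lemma walk_mirror_env: "walk (mirror_env a) (- x) t = - walk a x t"
  unfolding walk_def walk_hist_mirror_env by (simp add: last_map walk_hist_ne_Nil)

lemma Uplus_not: "Uplus (\<lambda>k. \<not> b k) z = Uminus b z"
  by (simp add: Uplus_def Uminus_def nth_index_def)

lemma Zplus_mirror_env: "Zplus (mirror_env a) y n = Zminus a y n"
  by (induction n) (simp_all add: mirror_env_def Uplus_not[symmetric] algebra_simps)

lemma nondeg_env_mirror_env: "nondeg_env a \<Longrightarrow> nondeg_env (mirror_env a)"
  by (simp add: nondeg_env_def nondeg_seq_def mirror_env_def)

theorem theorem2p4:
  fixes a :: arrow_env
  assumes "nondeg_env a"
  shows "((\<exists>t. walk a 0 t = -1) \<longleftrightarrow> (\<exists>n. Zplus a 1 n = 0))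
       \<and> ((\<exists>t. walk a 0 t = 1) \<longleftrightarrow> (\<exists>n. Zminus a 1 n = 0))"
proof
  show "(\<exists>t. walk a 0 t = -1) \<longleftrightarrow> (\<exists>n. Zplus a 1 n = 0)"
    using walk_hits_left_iff_Zplus_zero[OF assms] .
  have "(\<exists>t. walk a 0 t = 1) \<longleftrightarrow> (\<exists>t. walk (mirror_env a) 0 t = -1)"
    using walk_mirror_env[of a 0] by (metis minus_equation_iff minus_zero)
  also have "\<dots> \<longleftrightarrow> (\<exists>n. Zplus (mirror_env a) 1 n = 0)"
    using walk_hits_left_iff_Zplus_zero[OF nondeg_env_mirror_env[OF assms]] .
  finally show "(\<exists>t. walk a 0 t = 1) \<longleftrightarrow> (\<exists>n. Zminus a 1 n = 0)"
    by (simp add: Zplus_mirror_env)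
qed

end
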